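(* Let $G=(V,E)$ be a finite undirected graph with vertex set $V=\{1,\dots,N\}$, and let $\mathbf{c}=\{\mathbf{c}_1,\dots,\mathbf{c}_K\}$ be a partition of $V$ into $K$ nonempty blocks. Then the number of spanning trees $\mathcal{T}$ of $G$ that are compatible with $\mathbf{c}$ satisfies $$\log\bigl(|\{\mathcal{T}\in\mathcal{T}_G : \mathbf{c}\prec\mathcal{T}\}|\bigr)=\sum_{k=1}^K\log\bigl(|\mathcal{T}_{G[\mathbf{c}_k]}|\bigr)+\log\bigl(|\mathcal{T}_{G\diamond\mathbf{c}}|\bigr),$$ with the convention $\log 0=-\infty$.
   Context: For a (multi)graph $H$, $\mathcal{T}_H$ denotes the set of spanning trees of $H$ (connected acyclic subgraphs containing all vertices of $H$); in a multigraph, parallel edges are distinct, so spanning trees using different parallel copies are counted separately. For a tree $\mathcal{T}$ on $V$, $\mathbf{c}\prec\mathcal{T}$ means that every block $\mathbf{c}_k$ induces a connected subgraph of $\mathcal{T}$. $G[\mathbf{c}_k]$ is the subgraph of $G$ induced by $\mathbf{c}_k$ (vertex set $\mathbf{c}_k$, edges of $G$ with both endpoints in $\mathbf{c}_k$). For $g\neq h$, the cutset is $\mathrm{cutset}(G,\mathbf{c}_g,\mathbf{c}_h)=\{(u,v)\in E: u\in\mathbf{c}_g, v\in\mathbf{c}_h\}$. The aggregate multigraph $G\diamond\mathbf{c}$ has vertex set $\{1,\dots,K\}$ and, for each pair $g\neq h$, exactly $|\mathrm{cutset}(G,\mathbf{c}_g,\mathbf{c}_h)|$ parallel edges between $g$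 and $h$ (one for each edge of that cutset). *)

theory Defs
  imports "HOL-Library.Extended_Real"
begin

text \<open>A (multi)graph is given by a vertex set W, an edge set (of abstract edge
  identities, so parallel edges are distinct), and an endpoint map ends
  sending each edge to the 2-element set of its endpoints.\<close>

definition mg_adj :: "'v set \<Rightarrow> ('e \<Rightarrow> 'v set) \<Rightarrow> 'e set \<Rightarrow> 'v \<Rightarrow> 'v \<Rightarrow> bool" where
  "mg_adj W ends F x y \<longleftrightarrow> x \<in> W \<and> y \<in> W \<and> (\<exists>e\<in>F. ends e = {x, y})"

definition mg_connected :: "'v set \<Rightarrow> ('e \<Rightarrow> 'v set) \<Rightarrow> 'e set \<Rightarrow> bool" where
  "mg_connected W ends F \<longleftrightarrow> (\<forall>u\<in>W. \<forall>v\<in>W. (mg_adj W ends F)\<^sup>*\<^sup>* u v)"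

definition mg_has_cycle :: "('e \<Rightarrow> 'v set) \<Rightarrow> 'e set \<Rightarrow> bool" where
  "mg_has_cycle ends F \<longleftrightarrow> (\<exists>vs es. length es \<ge> 1 \<and> length vs = length es + 1 \<and>
      distinct es \<and> set es \<subseteq> F \<and> hd vs = last vs \<and> distinct (tl vs) \<and>
      (\<forall>i < length es. ends (es ! i) = {vs ! i, vs ! Suc i}))"

definition spanning_trees :: "'v set \<Rightarrow> 'e set \<Rightarrow> ('e \<Rightarrow> 'v set) \<Rightarrow> 'e set set" where
  "spanning_trees W Ed ends = {F. F \<subseteq> Ed \<and> mg_connected W ends F \<and> \<not> mg_has_cycle ends F}"

definition simple_graph :: "nat \<Rightarrow> nat set set \<Rightarrow> bool" where
  "simple_graph N E \<longleftrightarrow> (\<forall>e\<in>E. card e = 2 \<and> e \<subseteq> {1..N})"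

definition is_partition :: "nat set \<Rightarrow> nat \<Rightarrow> (nat \<Rightarrow> nat set) \<Rightarrow> bool" where
  "is_partition V K c \<longleftrightarrow> (\<forall>k\<in>{1..K}. c k \<noteq> {}) \<and>
     (\<forall>g\<in>{1..K}. \<forall>h\<in>{1..K}. g \<noteq> h \<longrightarrow> c g \<inter> c h = {}) \<and>
     (\<Union>k\<in>{1..K}. c k) = V"

definition compatible :: "nat \<Rightarrow> (nat \<Rightarrow> nat set) \<Rightarrow> nat set set \<Rightarrow> bool" where
  "compatible K c T \<longleftrightarrow> (\<forall>k\<in>{1..K}. mg_connected (c k) id {e\<in>T. e \<subseteq> c k})"

definition induced_edges :: "nat set set \<Rightarrow> nat set \<Rightarrow> nat set set" where
  "induced_edges E S = {e\<in>E. e \<subseteq> S}"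

text \<open>Aggregate multigraph G \<diamond> c: vertices 1..K, one edge for each edge of G
  joining two different blocks; that edge joins the indices of those blocks.\<close>
definition agg_ends :: "nat \<Rightarrow> (nat \<Rightarrow> nat set) \<Rightarrow> nat set \<Rightarrow> nat set" where
  "agg_ends K c e = {k\<in>{1..K}. e \<inter> c k \<noteq> {}}"

definition agg_edges :: "nat set set \<Rightarrow> nat \<Rightarrow> (nat \<Rightarrow> nat set) \<Rightarrow> nat set set" where
  "agg_edges E K c = {e\<in>E. \<exists>g\<in>{1..K}. \<exists>h\<in>{1..K}. g \<noteq> h \<and>
      (\<exists>u\<in>c g. \<exists>v\<in>c h. e = {u, v})}"

definition elog :: "nat \<Rightarrow> ereal" where
  "elog n = (if n = 0 then -\<infinity> else ereal (ln (real n)))"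

end

(*
  A spanning tree T of G compatible with c splits into its block parts T[c_k], which are
  spanning trees of the G[c_k], and its cross-block edges, which form a spanning tree of the
  aggregate multigraph G \<diamond> c: a walk of G projects to a walk of G \<diamond> c through the blocks
  of its vertices, and conversely a walk of G \<diamond> c lifts to a walk of G as soon as every
  block is internally connected. Gluing spanning trees of the G[c_k] and of G \<diamond> c gives back
  a compatible spanning tree, so the compatible spanning trees are in bijection with the
  product of these sets of spanning trees, and the formula is the logarithm of this count.
*)
theory Submission
  imports Defs "HOL-Library.FuncSet" "HOL-Library.Transitive_Closure_Table"
begin

section \<open>Walks and cycles in multigraphs\<close>

lemma rtrancl_path_restrict:
  "rtrancl_path r x xs y \<Longrightarrow> x \<in> A \<Longrightarrow> set xs \<subseteq> A \<Longrightarrow>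
    rtrancl_path (\<lambda>u v. r u v \<and> u \<in> A \<and> v \<in> A) x xs y"
  by (induction rule: rtrancl_path.induct) (auto intro: rtrancl_path.intros)

lemma rtrancl_path_snocD: "rtrancl_path r x (ys @ [z]) y \<Longrightarrow> r (last (x # ys)) z"
  by (induction ys arbitrary: x) (auto elim: rtrancl_path.cases)

lemma rtranclp_hd_last_if_successively:
  "successively r xs \<Longrightarrow> xs \<noteq> [] \<Longrightarrow> r\<^sup>*\<^sup>* (hd xs) (last xs)"
  by (induction r xs rule: successively.induct) auto

definition mg_edge :: "('e \<Rightarrow> 'v set) \<Rightarrow> 'e set \<Rightarrow> 'v \<Rightarrow> 'v \<Rightarrow> bool" where
  "mg_edge ends F x y \<longleftrightarrow> (\<exists>e\<in>F. ends e = {x, y})"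

lemma symp_mg_edge: "symp (mg_edge ends F)"
  unfolding symp_def mg_edge_def by (metis insert_commute)

lemma mg_reach_sym: "(mg_edge ends F)\<^sup>*\<^sup>* x y \<Longrightarrow> (mg_edge ends F)\<^sup>*\<^sup>* y x"
  by (rule sympD[OF symp_rtranclp[OF symp_mg_edge]])

lemma mg_edge_mono: "F \<subseteq> F' \<Longrightarrow> mg_edge ends F x y \<Longrightarrow> mg_edge ends F' x y"
  unfolding mg_edge_def by blast

lemma mg_reach_mono: "F \<subseteq> F' \<Longrightarrow> (mg_edge ends F)\<^sup>*\<^sup>* x y \<Longrightarrow> (mg_edge ends F')\<^sup>*\<^sup>* x y"
  by (metis mg_edge_mono mono_rtranclp)

lemma rtrancl_path_mg_edge_Diff:
  assumes "rtrancl_path (mg_edge ends F) x xs y" "u \<notin> set (x # xs)" "u \<in> ends f"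
  shows "rtrancl_path (mg_edge ends (F - {f})) x xs y"
proof -
  have "rtrancl_path (\<lambda>p q. mg_edge ends F p q \<and> p \<in> set (x # xs) \<and> q \<in> set (x # xs)) x xs y"
    by (rule rtrancl_path_restrict[OF assms(1)]) auto
  then show ?thesis
    by (rule rtrancl_path_mono) (use assms(2,3) in \<open>auto simp: mg_edge_def\<close>)
qed

lemma mg_adj_eq_mg_edge: "\<forall>e\<in>F. ends e \<subseteq> W \<Longrightarrow> mg_adj W ends F = mg_edge ends F"
  unfolding mg_adj_def mg_edge_def fun_eq_iff by blast

lemma mg_connected_iff_reach:
  "\<forall>e\<in>F. ends e \<subseteq> W \<Longrightarrow> mg_connected W ends F \<longleftrightarrow> (\<forall>u\<in>W. \<forall>v\<in>W. (mg_edge ends F)\<^sup>*\<^sup>* u v)"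
  by (simp add: mg_connected_def mg_adj_eq_mg_edge)

lemma mg_has_cycle_mono: "F \<subseteq> F' \<Longrightarrow> mg_has_cycle ends F \<Longrightarrow> mg_has_cycle ends F'"
  unfolding mg_has_cycle_def by blast

lemma mg_has_cycleI:
  assumes e: "e \<in> F" "ends e = {a, b}" "a \<noteq> b" and reach: "(mg_edge ends (F - {e}))\<^sup>*\<^sup>* a b"
  shows "mg_has_cycle ends F"
proof -
  obtain xs where path: "rtrancl_path (mg_edge ends (F - {e})) a xs b" and "distinct (a # xs)"
    using reach rtrancl_path_distinct unfolding rtranclp_eq_rtrancl_path by metis
  have "xs \<noteq> []"
    using path \<open>a \<noteq> b\<close> by (auto elim: rtrancl_path.cases)
  define zs where "zs = a # xs"
  have "\<forall>i<length xs. \<exists>f\<in>F - {e}. ends f = {zs ! i, zs ! Suc i}"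
    using rtrancl_path_nth[OF path] unfolding mg_edge_def zs_def by simp
  then obtain f where f: "\<And>i. i < length xs \<Longrightarrow> f i \<in> F - {e} \<and> ends (f i) = {zs ! i, zs ! Suc i}"
    by metis
  have "inj_on f {0..<length xs}"
  proof (rule inj_onI)
    fix i j assume ij: "i \<in> {0..<length xs}" "j \<in> {0..<length xs}" "f i = f j"
    then have "{zs ! i, zs ! Suc i} = {zs ! j, zs ! Suc j}"
      using f by (metis atLeastLessThan_iff)
    moreover have "Suc i < length zs" "Suc j < length zs"
      using ij by (auto simp: zs_def)
    ultimately show "i = j"
      using nth_eq_iff_index_eq[OF \<open>distinct (a # xs)\<close>[folded zs_def]]
      by (auto simp: doubleton_eq_iff)
  qed
  then have "distinct (e # map f [0..<length xs])"
    using f by (fastforce simp: distinct_map)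
  moreover have "set (e # map f [0..<length xs]) \<subseteq> F"
    using f e(1) by auto
  moreover have "hd (b # zs) = last (b # zs)"
    using rtrancl_path_last[OF path \<open>xs \<noteq> []\<close>] \<open>xs \<noteq> []\<close> by (simp add: zs_def)
  moreover have "\<forall>i < length (e # map f [0..<length xs]).
      ends ((e # map f [0..<length xs]) ! i) = {(b # zs) ! i, (b # zs) ! Suc i}"
  proof (intro allI impI)
    fix i assume "i < length (e # map f [0..<length xs])"
    then show "ends ((e # map f [0..<length xs]) ! i) = {(b # zs) ! i, (b # zs) ! Suc i}"
      using e(2) f by (cases i) (auto simp: insert_commute zs_def)
  qed
  moreover have "length (b # zs) = length (e # map f [0..<length xs]) + 1" "distinct (tl (b # zs))"
    using \<open>distinct (a # xs)\<close> by (simp_all add: zs_def)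
  \<comment> \<open>the cycle runs from b to a along e and back to b along the path edges f i\<close>
  ultimately show ?thesis
    unfolding mg_has_cycle_def
    by (intro exI[of _ "b # zs"] exI[of _ "e # map f [0..<length xs]"]) simp
qed

lemma mg_has_cycle_iff:
  assumes loopless: "\<forall>e\<in>F. \<forall>a. ends e \<noteq> {a}"
  shows "mg_has_cycle ends F \<longleftrightarrow>
    (\<exists>e\<in>F. \<exists>a b. a \<noteq> b \<and> ends e = {a, b} \<and> (mg_edge ends (F - {e}))\<^sup>*\<^sup>* a b)"
proof
  assume "mg_has_cycle ends F"
  then obtain vs es where cyc: "length es \<ge> 1" "length vs = length es + 1"
      "distinct es" "set es \<subseteq> F" "hd vs = last vs" "distinct (tl vs)"
      "\<forall>i < length es. ends (es ! i) = {vs ! i, vs ! Suc i}"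
    unfolding mg_has_cycle_def by blast
  define e where "e = es ! 0"
  have "0 < length es"
    using cyc(1) by linarith
  then have "e \<in> F" and ends_e: "ends e = {vs ! 0, vs ! 1}"
    using cyc(4,7) nth_mem unfolding e_def by auto
  then have "vs ! 0 \<noteq> vs ! 1"
    using loopless by fastforce
  obtain v0 v1 ws where vs: "vs = v0 # v1 # ws"
    using cyc(1,2) by (auto simp: Suc_le_length_iff length_Suc_conv)
  have "successively (mg_edge ends (F - {e})) (tl vs)"
    unfolding successively_conv_nth
  proof (intro allI impI)
    fix i assume i: "Suc i < length (tl vs)"
    then have "Suc i < length es"
      using cyc(2) by simp
    then have "es ! Suc i \<in> F - {e}"
      using cyc(4) nth_eq_iff_index_eq[OF cyc(3) _ \<open>0 < length es\<close>, of "Suc i"]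
      unfolding e_def by auto
    then show "mg_edge ends (F - {e}) (tl vs ! i) (tl vs ! Suc i)"
      using cyc(2,7) i unfolding mg_edge_def by (auto simp: nth_tl)
  qed
  moreover have "tl vs \<noteq> []" "hd (tl vs) = vs ! 1" "last (tl vs) = vs ! 0"
    using vs cyc(5) by auto
  ultimately have "(mg_edge ends (F - {e}))\<^sup>*\<^sup>* (vs ! 0) (vs ! 1)"
    by (metis mg_reach_sym rtranclp_hd_last_if_successively)
  then show "\<exists>e\<in>F. \<exists>a b. a \<noteq> b \<and> ends e = {a, b} \<and> (mg_edge ends (F - {e}))\<^sup>*\<^sup>* a b"
    using \<open>e \<in> F\<close> ends_e \<open>vs ! 0 \<noteq> vs ! 1\<close> by blast
next
  assume "\<exists>e\<in>F. \<exists>a b. a \<noteq> b \<and> ends e = {a, b} \<and> (mg_edge ends (F - {e}))\<^sup>*\<^sup>* a b"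
  then show "mg_has_cycle ends F"
    by (metis mg_has_cycleI)
qed

section \<open>Projecting and lifting walks along a partition\<close>

lemma agg_ends_subset: "agg_ends K c e \<subseteq> {1..K}"
  unfolding agg_ends_def by blast

lemma compatible_iff_induced_edges:
  "compatible K c T \<longleftrightarrow> (\<forall>k\<in>{1..K}. mg_connected (c k) id (induced_edges T (c k)))"
  by (simp add: compatible_def induced_edges_def)

locale graph_partition =
  fixes N K :: nat and E :: "nat set set" and c :: "nat \<Rightarrow> nat set"
  assumes simple: "simple_graph N E"
    and partition: "is_partition {1..N} K c"
begin

lemma blocks_disjoint: "g \<in> {1..K} \<Longrightarrow> h \<in> {1..K} \<Longrightarrow> x \<in> c g \<Longrightarrow> x \<in> c h \<Longrightarrow> g = h"
  using partition unfolding is_partition_def by blast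

lemma block_subset: "k \<in> {1..K} \<Longrightarrow> c k \<subseteq> {1..N}"
  using partition unfolding is_partition_def by blast

lemma block_nonempty: "k \<in> {1..K} \<Longrightarrow> c k \<noteq> {}"
  using partition unfolding is_partition_def by blast

definition block_of :: "nat \<Rightarrow> nat" where
  "block_of x = (THE k. k \<in> {1..K} \<and> x \<in> c k)"

lemma block_of_eq: "k \<in> {1..K} \<Longrightarrow> x \<in> c k \<Longrightarrow> block_of x = k"
  unfolding block_of_def using blocks_disjoint by (intro the_equality) auto

lemma block_of_in: "x \<in> {1..N} \<Longrightarrow> block_of x \<in> {1..K} \<and> x \<in> c (block_of x)"
proof -
  assume "x \<in> {1..N}"
  then obtain k where "k \<in> {1..K}" "x \<in> c k"
    using partition unfolding is_partition_def by blast
  then show ?thesis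
    using block_of_eq by simp
qed

lemma edge_subset: "e \<in> E \<Longrightarrow> e \<subseteq> {1..N}"
  using simple unfolding simple_graph_def by blast

lemma edgeE:
  assumes "e \<in> E"
  obtains x y where "e = {x, y}" "x \<noteq> y" "x \<in> {1..N}" "y \<in> {1..N}"
proof -
  have "card e = 2"
    using simple assms unfolding simple_graph_def by blast
  then obtain x y where "e = {x, y}" "x \<noteq> y"
    by (auto simp: card_2_iff)
  then show thesis
    using that edge_subset[OF assms] by blast
qed

lemma agg_edges_iff: "e \<in> agg_edges E K c \<longleftrightarrow> e \<in> E \<and> (\<forall>k\<in>{1..K}. \<not> e \<subseteq> c k)"
proof
  assume "e \<in> agg_edges E K c"
  then obtain g h u v where guv: "e \<in> E" "g \<in> {1..K}" "h \<in> {1..K}" "g \<noteq> h"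
      "u \<in> c g" "v \<in> c h" "e = {u, v}"
    unfolding agg_edges_def by blast
  have "\<not> e \<subseteq> c k" if "k \<in> {1..K}" for k
    using guv that blocks_disjoint[of g k u] blocks_disjoint[of h k v] by auto
  then show "e \<in> E \<and> (\<forall>k\<in>{1..K}. \<not> e \<subseteq> c k)"
    using guv(1) by blast
next
  assume e: "e \<in> E \<and> (\<forall>k\<in>{1..K}. \<not> e \<subseteq> c k)"
  then obtain x y where xy: "e = {x, y}" "x \<in> {1..N}" "y \<in> {1..N}"
    using edgeE by blast
  have "block_of x \<noteq> block_of y"
    using e xy block_of_in[of x] block_of_in[of y] by auto
  then show "e \<in> agg_edges E K c"
    unfolding agg_edges_def using e xy block_of_in[of x] block_of_in[of y] by blast
qed

lemma agg_edges_subset: "agg_edges E K c \<subseteq> E"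
  unfolding agg_edges_def by blast

lemma agg_ends_doubleton:
  assumes "x \<in> {1..N}" "y \<in> {1..N}"
  shows "agg_ends K c {x, y} = {block_of x, block_of y}"
proof -
  have "k \<in> {1..K} \<and> {x, y} \<inter> c k \<noteq> {} \<longleftrightarrow> k = block_of x \<or> k = block_of y" for k
    using block_of_in[OF assms(1)] block_of_in[OF assms(2)] block_of_eq[of k x] block_of_eq[of k y]
    by blast
  then show ?thesis
    unfolding agg_ends_def by blast
qed

lemma agg_edge_between:
  assumes "e \<in> agg_edges E K c" "agg_ends K c e = {g, h}"
  obtains x y where "e = {x, y}" "x \<in> c g" "y \<in> c h"
proof -
  obtain x y where xy: "e = {x, y}" "x \<in> {1..N}" "y \<in> {1..N}"
    using edgeE[OF agg_edges_subset[THEN subsetD, OF assms(1)]] by blast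
  then have "{block_of x, block_of y} = {g, h}"
    using assms(2) agg_ends_doubleton by simp
  then consider "block_of x = g" "block_of y = h" | "block_of x = h" "block_of y = g"
    by (auto simp: doubleton_eq_iff)
  then show thesis
  proof cases
    case 1
    then show thesis
      using that[of x y] xy block_of_in[OF xy(2)] block_of_in[OF xy(3)] by simp
  next
    case 2
    moreover have "e = {y, x}"
      using xy(1) by blast
    ultimately show thesis
      using that[of y x] xy block_of_in[OF xy(2)] block_of_in[OF xy(3)] by simp
  qed
qed

lemma agg_loopless:
  assumes "e \<in> agg_edges E K c"
  shows "agg_ends K c e \<noteq> {a}"
proof
  assume loop: "agg_ends K c e = {a}"
  then obtain x y where "e = {x, y}" "x \<in> c a" "y \<in> c a"
    using agg_edge_between[OF assms, of a a] by auto
  moreover have "a \<in> {1..K}"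
    using loop agg_ends_subset by blast
  ultimately show False
    using agg_edges_iff[THEN iffD1, OF assms] by blast
qed

lemma edge_not_singleton:
  assumes "e \<in> E"
  shows "e \<noteq> {a}"
proof -
  obtain x y where "e = {x, y}" "x \<noteq> y"
    using edgeE[OF assms] by blast
  then show ?thesis by auto
qed

lemma inner_edge_not_agg: "k \<in> {1..K} \<Longrightarrow> e \<subseteq> c k \<Longrightarrow> e \<notin> agg_edges E K c"
  using agg_edges_iff by blast

lemma agg_edge_iff_blocks_differ:
  assumes "{x, y} \<in> E" "x \<in> {1..N}" "y \<in> {1..N}"
  shows "{x, y} \<in> agg_edges E K c \<longleftrightarrow> block_of x \<noteq> block_of y"
proof
  assume "{x, y} \<in> agg_edges E K c"
  then show "block_of x \<noteq> block_of y"
    using inner_edge_not_agg block_of_in[OF assms(2)] block_of_in[OF assms(3)] by force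
next
  assume "block_of x \<noteq> block_of y"
  then have "\<not> {x, y} \<subseteq> c k" if "k \<in> {1..K}" for k
    using that block_of_eq[of k x] block_of_eq[of k y] by auto
  then show "{x, y} \<in> agg_edges E K c"
    using agg_edges_iff assms(1) by blast
qed

lemma reach_project:
  assumes "S \<subseteq> E" "(mg_edge id S)\<^sup>*\<^sup>* x y"
  shows "(mg_edge (agg_ends K c) (S \<inter> agg_edges E K c))\<^sup>*\<^sup>* (block_of x) (block_of y)"
  using assms(2)
proof (induction rule: rtranclp_induct)
  case base
  then show ?case by simp
next
  case (step y z)
  then have f: "{y, z} \<in> S"
    unfolding mg_edge_def by auto
  then have yz: "y \<in> {1..N}" "z \<in> {1..N}"
    using assms(1) edge_subset by blast+
  show ?case
  proof (cases "block_of y = block_of z")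
    case True
    then show ?thesis using step.IH by simp
  next
    case False
    then have "{y, z} \<in> S \<inter> agg_edges E K c"
      using f assms(1) agg_edge_iff_blocks_differ[OF _ yz] by blast
    then have "mg_edge (agg_ends K c) (S \<inter> agg_edges E K c) (block_of y) (block_of z)"
      unfolding mg_edge_def using agg_ends_doubleton[OF yz] by blast
    then show ?thesis
      by (rule rtranclp.rtrancl_into_rtrancl[OF step.IH])
  qed
qed

lemma compatible_reach:
  assumes "compatible K c T" "k \<in> {1..K}" "u \<in> c k" "v \<in> c k"
  shows "(mg_edge id (induced_edges T (c k)))\<^sup>*\<^sup>* u v"
proof -
  have "mg_connected (c k) id (induced_edges T (c k))"
    using assms(1,2) unfolding compatible_def induced_edges_def by blast
  then show ?thesis
    using assms(3,4) mg_connected_iff_reach[of "induced_edges T (c k)" id "c k"]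
    unfolding induced_edges_def by auto
qed

lemma reach_lift:
  assumes T: "compatible K c T" and S: "S \<subseteq> agg_edges E K c"
    and reach: "(mg_edge (agg_ends K c) S)\<^sup>*\<^sup>* g h" and "g \<in> {1..K}" "u \<in> c g" "v \<in> c h"
  shows "(mg_edge id (S \<union> (T - agg_edges E K c)))\<^sup>*\<^sup>* u v"
  using reach \<open>v \<in> c h\<close>
proof (induction arbitrary: v rule: rtranclp_induct)
  have inner: "induced_edges T (c k) \<subseteq> S \<union> (T - agg_edges E K c)" if "k \<in> {1..K}" for k
    using inner_edge_not_agg[OF that] unfolding induced_edges_def by blast
  {
    case base
    then show ?case
      using mg_reach_mono[OF inner[OF \<open>g \<in> {1..K}\<close>] compatible_reach[OF T \<open>g \<in> {1..K}\<close> \<open>u \<in> c g\<close>]]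
      by blast
  next
    case (step h' h)
    then obtain f where f: "f \<in> S" "agg_ends K c f = {h', h}"
      unfolding mg_edge_def by blast
    have "f \<in> agg_edges E K c"
      using S f(1) by blast
    then obtain x y where xy: "f = {x, y}" "x \<in> c h'" "y \<in> c h"
      using f(2) by (rule agg_edge_between)
    have "h \<in> {1..K}"
      using f(2) agg_ends_subset by blast
    have "(mg_edge id (S \<union> (T - agg_edges E K c)))\<^sup>*\<^sup>* u x"
      using step.IH xy(2) .
    moreover have "mg_edge id (S \<union> (T - agg_edges E K c)) x y"
      unfolding mg_edge_def using f(1) xy(1) by auto
    moreover have "(mg_edge id (S \<union> (T - agg_edges E K c)))\<^sup>*\<^sup>* y v"
      using mg_reach_mono[OF inner[OF \<open>h \<in> {1..K}\<close>] compatible_reach[OF T \<open>h \<in> {1..K}\<close> xy(3) step.prems]] .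
    ultimately show ?case
      by (meson rtranclp.rtrancl_into_rtrancl rtranclp_trans)
  }
qed

lemma agg_part_connected:
  assumes "T \<subseteq> E" "mg_connected {1..N} id T"
  shows "mg_connected {1..K} (agg_ends K c) (T \<inter> agg_edges E K c)"
proof -
  have "\<forall>e\<in>T. id e \<subseteq> {1..N}"
    using assms(1) edge_subset by auto
  then have reach: "(mg_edge id T)\<^sup>*\<^sup>* u v" if "u \<in> {1..N}" "v \<in> {1..N}" for u v
    using assms(2) that unfolding mg_connected_iff_reach[OF \<open>\<forall>e\<in>T. id e \<subseteq> {1..N}\<close>] by blast
  have "(mg_edge (agg_ends K c) (T \<inter> agg_edges E K c))\<^sup>*\<^sup>* g h"
    if gh: "g \<in> {1..K}" "h \<in> {1..K}" for g h
  proof -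
    obtain u v where uv: "u \<in> c g" "v \<in> c h"
      using block_nonempty gh by blast
    then have "u \<in> {1..N}" "v \<in> {1..N}"
      using block_subset gh by blast+
    then have "(mg_edge (agg_ends K c) (T \<inter> agg_edges E K c))\<^sup>*\<^sup>* (block_of u) (block_of v)"
      by (intro reach_project assms(1) reach)
    then show ?thesis
      using block_of_eq gh uv by simp
  qed
  moreover have "\<forall>e\<in>T \<inter> agg_edges E K c. agg_ends K c e \<subseteq> {1..K}"
    using agg_ends_subset by blast
  ultimately show ?thesis
    using mg_connected_iff_reach by blast
qed

lemma agg_part_acyclic:
  assumes T: "T \<subseteq> E" "\<not> mg_has_cycle id T" "compatible K c T"
  shows "\<not> mg_has_cycle (agg_ends K c) (T \<inter> agg_edges E K c)"
proof
  have loopless: "\<forall>e\<in>T \<inter> agg_edges E K c. \<forall>a. agg_ends K c e \<noteq> {a}"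
    using agg_loopless by blast
  assume "mg_has_cycle (agg_ends K c) (T \<inter> agg_edges E K c)"
  then obtain e g h where e: "e \<in> T \<inter> agg_edges E K c" "g \<noteq> h" "agg_ends K c e = {g, h}"
      and reach: "(mg_edge (agg_ends K c) (T \<inter> agg_edges E K c - {e}))\<^sup>*\<^sup>* g h"
    unfolding mg_has_cycle_iff[OF loopless] by blast
  have "e \<in> agg_edges E K c"
    using e(1) by blast
  then obtain x y where xy: "e = {x, y}" "x \<in> c g" "y \<in> c h"
    using e(3) by (rule agg_edge_between)
  have "g \<in> {1..K}" "h \<in> {1..K}"
    using e(3) agg_ends_subset by blast+
  then have "x \<noteq> y"
    using xy e(2) blocks_disjoint by blast
  have "(mg_edge id ((T \<inter> agg_edges E K c - {e}) \<union> (T - agg_edges E K c)))\<^sup>*\<^sup>* x y"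
    using reach_lift[OF T(3) _ reach \<open>g \<in> {1..K}\<close> xy(2,3)] by blast
  then have "(mg_edge id (T - {e}))\<^sup>*\<^sup>* x y"
    by (rule mg_reach_mono[rotated]) (use e(1) in blast)
  then show False
    using mg_has_cycleI[of e T id x y] e(1) xy(1) \<open>x \<noteq> y\<close> T(2) by simp
qed

text \<open>The first edge by which a simple path leaves a block joins two different blocks, and
  the rest of the path never returns to its inner end, so the projection of the rest closes a
  cycle with that edge.\<close>

lemma path_leaving_block_agg_cycle:
  assumes S: "S \<subseteq> E" and k: "k \<in> {1..K}" and ab: "a \<in> c k" "b \<in> c k"
    and path: "rtrancl_path (mg_edge id S) a xs b" "distinct (a # xs)" and "\<not> set xs \<subseteq> c k"
  shows "mg_has_cycle (agg_ends K c) (S \<inter> agg_edges E K c)"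
proof -
  have "\<exists>v\<in>set xs. v \<notin> c k"
    using \<open>\<not> set xs \<subseteq> c k\<close> by blast
  then obtain pre w post where xs: "xs = pre @ w # post" "w \<notin> c k" "\<forall>v\<in>set pre. v \<in> c k"
    by (rule split_list_first_propE) blast
  define u where "u = last (a # pre)"
  have "u \<in> c k"
    unfolding u_def using ab(1) xs(3) by (cases pre rule: rev_cases) auto
  from path(1) xs(1) obtain into: "rtrancl_path (mg_edge id S) a (pre @ [w]) w"
    and rest: "rtrancl_path (mg_edge id S) w post b"
    by (auto elim: rtrancl_path_appendE)
  have f: "{u, w} \<in> S"
    using rtrancl_path_snocD[OF into] unfolding u_def mg_edge_def by auto
  then have uw: "u \<in> {1..N}" "w \<in> {1..N}"
    using S edge_subset by blast+
  have "block_of u = k" "block_of w \<noteq> k"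
    using block_of_eq[OF k \<open>u \<in> c k\<close>] block_of_in[OF uw(2)] xs(2) by auto
  then have f_agg: "{u, w} \<in> S \<inter> agg_edges E K c"
    using f S agg_edge_iff_blocks_differ[OF _ uw] by auto
  have "u \<notin> set (w # post)"
    using path(2) xs(1) unfolding u_def by (cases pre rule: rev_cases) auto
  then have "rtrancl_path (mg_edge id (S - {{u, w}})) w post b"
    by (rule rtrancl_path_mg_edge_Diff[OF rest, of u]) auto
  then have "(mg_edge id (S - {{u, w}}))\<^sup>*\<^sup>* w b"
    unfolding rtranclp_eq_rtrancl_path by blast
  then have "(mg_edge (agg_ends K c) ((S - {{u, w}}) \<inter> agg_edges E K c))\<^sup>*\<^sup>*
      (block_of w) (block_of b)"
    by (intro reach_project) (use S in blast)
  moreover have "(S - {{u, w}}) \<inter> agg_edges E K c = S \<inter> agg_edges E K c - {{u, w}}"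
    by blast
  ultimately have "(mg_edge (agg_ends K c) (S \<inter> agg_edges E K c - {{u, w}}))\<^sup>*\<^sup>* k (block_of w)"
    using block_of_eq[OF k ab(2)] mg_reach_sym by metis
  then show ?thesis
    using mg_has_cycleI[OF f_agg] agg_ends_doubleton[OF uw] \<open>block_of u = k\<close> \<open>block_of w \<noteq> k\<close>
    by (metis (no_types, lifting))
qed

lemma block_walk_or_agg_cycle:
  assumes S: "S \<subseteq> E" and k: "k \<in> {1..K}" and ab: "a \<in> c k" "b \<in> c k"
    and reach: "(mg_edge id S)\<^sup>*\<^sup>* a b"
  shows "(mg_edge id (induced_edges S (c k)))\<^sup>*\<^sup>* a b \<or>
    mg_has_cycle (agg_ends K c) (S \<inter> agg_edges E K c)"
proof -
  obtain xs where path: "rtrancl_path (mg_edge id S) a xs b" and "distinct (a # xs)"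
    using reach rtrancl_path_distinct unfolding rtranclp_eq_rtrancl_path by metis
  show ?thesis
  proof (cases "set xs \<subseteq> c k")
    case True
    have "rtrancl_path (\<lambda>u v. mg_edge id S u v \<and> u \<in> c k \<and> v \<in> c k) a xs b"
      using rtrancl_path_restrict[OF path ab(1) True] .
    then have "rtrancl_path (mg_edge id (induced_edges S (c k))) a xs b"
      by (rule rtrancl_path_mono) (auto simp: mg_edge_def induced_edges_def)
    then show ?thesis
      unfolding rtranclp_eq_rtrancl_path by blast
  next
    case False
    then show ?thesis
      using path_leaving_block_agg_cycle[OF S k ab path \<open>distinct (a # xs)\<close>] by blast
  qed
qed

lemma agg_edge_bypass_agg_cycle:
  assumes T: "T \<subseteq> E" and e: "e \<in> T \<inter> agg_edges E K c" "e = {a, b}"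
    and reach: "(mg_edge id (T - {e}))\<^sup>*\<^sup>* a b"
  shows "mg_has_cycle (agg_ends K c) (T \<inter> agg_edges E K c)"
proof -
  have ab: "a \<in> {1..N}" "b \<in> {1..N}"
    using e T edge_subset by blast+
  have "(mg_edge (agg_ends K c) ((T - {e}) \<inter> agg_edges E K c))\<^sup>*\<^sup>* (block_of a) (block_of b)"
    by (rule reach_project[OF _ reach]) (use T in blast)
  moreover have "(T - {e}) \<inter> agg_edges E K c = T \<inter> agg_edges E K c - {e}"
    by blast
  moreover have "block_of a \<noteq> block_of b"
    using agg_edge_iff_blocks_differ[OF _ ab] e T by blast
  ultimately show ?thesis
    using mg_has_cycleI[OF e(1)] agg_ends_doubleton[OF ab] e(2) by simp
qed

section \<open>Splitting and gluing compatible spanning trees\<close>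

definition glue :: "(nat \<Rightarrow> nat set set) \<Rightarrow> nat set set \<Rightarrow> nat set set" where
  "glue \<tau> A = (\<Union>k\<in>{1..K}. \<tau> k) \<union> A"

lemma glue_restrict: "glue (restrict \<tau> {1..K}) A = glue \<tau> A"
  unfolding glue_def by auto

lemma glue_induced_edges:
  assumes "T \<subseteq> E"
  shows "glue (\<lambda>k. induced_edges T (c k)) (T \<inter> agg_edges E K c) = T"
proof -
  have "e \<in> agg_edges E K c \<or> (\<exists>k\<in>{1..K}. e \<subseteq> c k)" if "e \<in> T" for e
    using agg_edges_iff[of e] assms that by blast
  then show ?thesis
    unfolding glue_def induced_edges_def by blast
qed

context
  fixes \<tau> :: "nat \<Rightarrow> nat set set" and A :: "nat set set"
  assumes inner: "\<And>k. k \<in> {1..K} \<Longrightarrow> \<tau> k \<subseteq> induced_edges E (c k)"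
    and outer: "A \<subseteq> agg_edges E K c"
begin

lemma glue_subset: "glue \<tau> A \<subseteq> E"
  using inner outer agg_edges_subset unfolding glue_def induced_edges_def by blast

lemma glue_inter_agg_edges: "glue \<tau> A \<inter> agg_edges E K c = A"
proof -
  have "\<tau> k \<inter> agg_edges E K c = {}" if "k \<in> {1..K}" for k
    using inner[OF that] inner_edge_not_agg[OF that] unfolding induced_edges_def by blast
  then show ?thesis
    using outer unfolding glue_def by blast
qed

lemma induced_edges_glue:
  assumes k: "k \<in> {1..K}"
  shows "induced_edges (glue \<tau> A) (c k) = \<tau> k"
proof
  show "\<tau> k \<subseteq> induced_edges (glue \<tau> A) (c k)"
    using inner[OF k] k unfolding glue_def induced_edges_def by blast
next
  show "induced_edges (glue \<tau> A) (c k) \<subseteq> \<tau> k"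
  proof
    fix e assume e: "e \<in> induced_edges (glue \<tau> A) (c k)"
    then have "e \<notin> A"
      using outer inner_edge_not_agg[OF k] unfolding induced_edges_def by blast
    then obtain j where j: "j \<in> {1..K}" "e \<in> \<tau> j"
      using e unfolding glue_def induced_edges_def by blast
    then have "e \<in> E" "e \<subseteq> c j"
      using inner[OF j(1)] unfolding induced_edges_def by blast+
    moreover obtain x y where "e = {x, y}"
      using edgeE[OF \<open>e \<in> E\<close>] by blast
    ultimately have "j = k"
      using e blocks_disjoint[OF j(1) k, of x] unfolding induced_edges_def by blast
    then show "e \<in> \<tau> k"
      using j(2) by simp
  qed
qed

lemma compatible_glue:
  "(\<And>k. k \<in> {1..K} \<Longrightarrow> mg_connected (c k) id (\<tau> k)) \<Longrightarrow> compatible K c (glue \<tau> A)"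
  by (simp add: compatible_iff_induced_edges induced_edges_glue)

lemma glue_connected:
  assumes "\<And>k. k \<in> {1..K} \<Longrightarrow> mg_connected (c k) id (\<tau> k)"
    and "mg_connected {1..K} (agg_ends K c) A"
  shows "mg_connected {1..N} id (glue \<tau> A)"
proof -
  have agg_reach: "(mg_edge (agg_ends K c) A)\<^sup>*\<^sup>* g h" if "g \<in> {1..K}" "h \<in> {1..K}" for g h
    using assms(2) that agg_ends_subset mg_connected_iff_reach[of A "agg_ends K c" "{1..K}"] by blast
  have "(mg_edge id (glue \<tau> A))\<^sup>*\<^sup>* u v" if "u \<in> {1..N}" "v \<in> {1..N}" for u v
  proof -
    have "(mg_edge id (A \<union> (glue \<tau> A - agg_edges E K c)))\<^sup>*\<^sup>* u v"
      using reach_lift[OF compatible_glue[OF assms(1)] outer agg_reach] block_of_in that by blast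
    moreover have "A \<union> (glue \<tau> A - agg_edges E K c) = glue \<tau> A"
      using glue_inter_agg_edges by blast
    ultimately show ?thesis
      by simp
  qed
  moreover have "\<forall>e\<in>glue \<tau> A. id e \<subseteq> {1..N}"
    using glue_subset edge_subset by auto
  ultimately show ?thesis
    using mg_connected_iff_reach by blast
qed

lemma glue_acyclic:
  assumes "\<And>k. k \<in> {1..K} \<Longrightarrow> \<not> mg_has_cycle id (\<tau> k)"
    and "\<not> mg_has_cycle (agg_ends K c) A"
  shows "\<not> mg_has_cycle id (glue \<tau> A)"
proof
  define T where "T = glue \<tau> A"
  have "T \<subseteq> E"
    using glue_subset unfolding T_def .
  then have loopless: "\<forall>e\<in>T. \<forall>a. id e \<noteq> {a}"
    using edge_not_singleton by auto
  assume "mg_has_cycle id (glue \<tau> A)"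
  then obtain e a b where e: "e \<in> T" "a \<noteq> b" "e = {a, b}"
    and reach: "(mg_edge id (T - {e}))\<^sup>*\<^sup>* a b"
    unfolding T_def[symmetric] mg_has_cycle_iff[OF loopless] by auto
  have "T - {e} \<subseteq> E"
    using \<open>T \<subseteq> E\<close> by blast
  have T_agg: "T \<inter> agg_edges E K c = A"
    using glue_inter_agg_edges unfolding T_def .
  show False
  proof (cases "e \<in> A")
    case True
    then have "mg_has_cycle (agg_ends K c) A"
      using agg_edge_bypass_agg_cycle[OF \<open>T \<subseteq> E\<close> _ e(3) reach] T_agg by blast
    then show False
      using assms(2) by contradiction
  next
    case False
    then obtain k where k: "k \<in> {1..K}" "e \<in> \<tau> k"
      using e(1) unfolding T_def glue_def by blast
    then have "a \<in> c k" "b \<in> c k"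
      using inner e(3) unfolding induced_edges_def by blast+
    from block_walk_or_agg_cycle[OF \<open>T - {e} \<subseteq> E\<close> k(1) this reach]
    show False
    proof
      assume "(mg_edge id (induced_edges (T - {e}) (c k)))\<^sup>*\<^sup>* a b"
      moreover have "induced_edges (T - {e}) (c k) = \<tau> k - {e}"
        using induced_edges_glue[OF k(1)] unfolding T_def induced_edges_def by blast
      ultimately have "mg_has_cycle id (\<tau> k)"
        using mg_has_cycleI[OF k(2) _ e(2)] e(3) by simp
      then show False
        using assms(1) k(1) by blast
    next
      assume "mg_has_cycle (agg_ends K c) ((T - {e}) \<inter> agg_edges E K c)"
      then have "mg_has_cycle (agg_ends K c) A"
        by (rule mg_has_cycle_mono[rotated]) (use T_agg in blast)
      then show False
        using assms(2) by contradiction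
    qed
  qed
qed

end

abbreviation block_trees :: "nat \<Rightarrow> nat set set set" where
  "block_trees k \<equiv> spanning_trees (c k) (induced_edges E (c k)) id"

abbreviation agg_trees :: "nat set set set" where
  "agg_trees \<equiv> spanning_trees {1..K} (agg_edges E K c) (agg_ends K c)"

abbreviation compatible_trees :: "nat set set set" where
  "compatible_trees \<equiv> {T \<in> spanning_trees {1..N} E id. compatible K c T}"

definition decompose :: "nat set set \<Rightarrow> (nat \<Rightarrow> nat set set) \<times> nat set set" where
  "decompose T = (\<lambda>k\<in>{1..K}. induced_edges T (c k), T \<inter> agg_edges E K c)"

lemma decompose_compatible_tree:
  assumes "T \<in> compatible_trees"
  shows "decompose T \<in> (\<Pi>\<^sub>E k\<in>{1..K}. block_trees k) \<times> agg_trees"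
proof -
  have T: "T \<subseteq> E" "mg_connected {1..N} id T" "\<not> mg_has_cycle id T" "compatible K c T"
    using assms unfolding spanning_trees_def by auto
  have "induced_edges T (c k) \<in> block_trees k" if "k \<in> {1..K}" for k
    using T that mg_has_cycle_mono[of "induced_edges T (c k)" T id]
    unfolding spanning_trees_def compatible_iff_induced_edges induced_edges_def by blast
  moreover have "T \<inter> agg_edges E K c \<in> agg_trees"
    using agg_part_connected[OF T(1,2)] agg_part_acyclic[OF T(1,3,4)]
    unfolding spanning_trees_def by blast
  ultimately show ?thesis
    unfolding decompose_def by simp
qed

lemma glue_compatible_tree:
  assumes "\<tau> \<in> (\<Pi>\<^sub>E k\<in>{1..K}. block_trees k)" "A \<in> agg_trees"
  shows "glue \<tau> A \<in> compatible_trees"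
proof -
  have \<tau>: "\<tau> k \<subseteq> induced_edges E (c k)" "mg_connected (c k) id (\<tau> k)" "\<not> mg_has_cycle id (\<tau> k)"
    if "k \<in> {1..K}" for k
    using assms(1) that unfolding spanning_trees_def by auto
  have A: "A \<subseteq> agg_edges E K c" "mg_connected {1..K} (agg_ends K c) A"
      "\<not> mg_has_cycle (agg_ends K c) A"
    using assms(2) unfolding spanning_trees_def by auto
  show ?thesis
    using glue_subset[OF \<tau>(1) A(1)] glue_connected[OF \<tau>(1) A(1) \<tau>(2) A(2)]
      glue_acyclic[OF \<tau>(1) A(1) \<tau>(3) A(3)] compatible_glue[OF \<tau>(1) A(1) \<tau>(2)]
    unfolding spanning_trees_def by blast
qed

lemma decompose_glue:
  assumes "\<tau> \<in> (\<Pi>\<^sub>E k\<in>{1..K}. block_trees k)" "A \<in> agg_trees"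
  shows "decompose (glue \<tau> A) = (\<tau>, A)"
proof -
  have inner: "\<tau> k \<subseteq> induced_edges E (c k)" if "k \<in> {1..K}" for k
    using assms(1) that unfolding spanning_trees_def by auto
  have outer: "A \<subseteq> agg_edges E K c"
    using assms(2) unfolding spanning_trees_def by auto
  have "(\<lambda>k\<in>{1..K}. induced_edges (glue \<tau> A) (c k)) = restrict \<tau> {1..K}"
    using induced_edges_glue[OF inner outer] by (rule restrict_ext)
  also have "\<dots> = \<tau>"
    using assms(1) by (rule PiE_restrict)
  finally have "(\<lambda>k\<in>{1..K}. induced_edges (glue \<tau> A) (c k)) = \<tau>" .
  then show ?thesis
    unfolding decompose_def using glue_inter_agg_edges[OF inner outer] by simp
qed

lemma bij_betw_decompose:
  "bij_betw decompose compatible_trees ((\<Pi>\<^sub>E k\<in>{1..K}. block_trees k) \<times> agg_trees)"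
proof (rule bij_betw_byWitness[where f' = "\<lambda>(\<tau>, A). glue \<tau> A"])
  show "\<forall>T\<in>compatible_trees. (\<lambda>(\<tau>, A). glue \<tau> A) (decompose T) = T"
  proof
    fix T assume "T \<in> compatible_trees"
    then have "T \<subseteq> E"
      unfolding spanning_trees_def by blast
    then show "(\<lambda>(\<tau>, A). glue \<tau> A) (decompose T) = T"
      unfolding decompose_def prod.case glue_restrict by (rule glue_induced_edges)
  qed
  show "\<forall>p\<in>(\<Pi>\<^sub>E k\<in>{1..K}. block_trees k) \<times> agg_trees. decompose ((\<lambda>(\<tau>, A). glue \<tau> A) p) = p"
    using decompose_glue by auto
  show "decompose ` compatible_trees \<subseteq> (\<Pi>\<^sub>E k\<in>{1..K}. block_trees k) \<times> agg_trees"
    using decompose_compatible_tree by blast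
  show "(\<lambda>(\<tau>, A). glue \<tau> A) ` ((\<Pi>\<^sub>E k\<in>{1..K}. block_trees k) \<times> agg_trees) \<subseteq> compatible_trees"
    using glue_compatible_tree by auto
qed

lemma card_compatible_trees:
  "card compatible_trees = (\<Prod>k\<in>{1..K}. card (block_trees k)) * card agg_trees"
  using bij_betw_same_card[OF bij_betw_decompose] by (simp add: card_cartesian_product card_PiE)

end

lemma elog_mult: "elog (m * n) = elog m + elog n"
  unfolding elog_def by (simp add: ln_mult)

lemma elog_prod: "finite S \<Longrightarrow> elog (\<Prod>k\<in>S. f k) = (\<Sum>k\<in>S. elog (f k))"
proof (induction rule: finite_induct)
  case empty
  then show ?case by (simp add: elog_def)
next
  case (insert k S)
  then show ?case by (simp add: elog_mult)
qed

theorem proposition1: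
  fixes N K :: nat and E :: "nat set set" and c :: "nat \<Rightarrow> nat set"
  assumes "simple_graph N E"
    and "is_partition {1..N} K c"
  shows "elog (card {T \<in> spanning_trees {1..N} E id. compatible K c T}) =
         (\<Sum>k\<in>{1..K}. elog (card (spanning_trees (c k) (induced_edges E (c k)) id)))
         + elog (card (spanning_trees {1..K} (agg_edges E K c) (agg_ends K c)))"
proof -
  interpret graph_partition N K E c
    using assms by unfold_locales
  show ?thesis
    unfolding card_compatible_trees elog_mult by (simp add: elog_prod)
qed

end
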